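(* Let $r\ge 2$ and $n\ge 3$. Let $W_n$ be the word over $\{H,v\}$ obtained from the Christoffel word of $\mathcal{C}_n$ by replacing every $E$ with $H$ and every $N$ with $v$ (this is the word encoding the pair consisting of all horizontal edges and no vertical edges of $\mathcal{C}_n$). Then $$w_q(W_n)=c_{n-1}+c_{n-2}-1.$$
   Context: Fix an integer $r\ge 2$. Define $c_1=0$, $c_2=1$, $c_n=rc_{n-1}-c_{n-2}$ for $n\ge 3$. For nonnegative integers $a,b$, the maximal Dyck path $\mathcal{P}(a,b)$ is the lattice path from $(0,0)$ to $(a,b)$ using unit north and east steps that never passes strictly above the line segment from $(0,0)$ to $(a,b)$ and is closest to that segment. For $n\ge 3$ let $\mathcal{C}_n=\mathcal{P}(c_{n-1},c_{n-2})$; its Christoffel word is the word over $\{E,N\}$ recording its steps in order ($E$ for east, $N$ for north). On the alphabet $A=\{h,v,H,V\}$ define $w_q$ on two-letter words by $w_q(hv)=w_q(Hv)=w_q(hV)=1$, $w_q(Hh)=w_q(vV)=r$, $w_q(VH)=r^2-1$, and $w_q(yx)=-w_q(xy)$ for all $x,y\in A$ (so $w_q(xx)=0$). For a word $W=W_1W_2\cdots W_\ell$ over $A$, set $w_q(W)=\sum_{1\le i<j\le \ell}w_q(W_iW_j)$. *)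

theory Defs
  imports Main
begin

text \<open>The sequence c_n (index 0 is an auxiliary value chosen so that the
recurrence also produces c_2 = 1; only c_n for n >= 1 is used).\<close>
fun cseq :: "int \<Rightarrow> nat \<Rightarrow> int" where
  "cseq r 0 = -1"
| "cseq r (Suc 0) = 0"
| "cseq r (Suc (Suc n)) = r * cseq r (Suc n) - cseq r n"

datatype step = E | N

definition xcoord :: "step list \<Rightarrow> nat" where
  "xcoord p = length (filter (\<lambda>s. s = E) p)"

definition ycoord :: "step list \<Rightarrow> nat" where
  "ycoord p = length (filter (\<lambda>s. s = N) p)"

text \<open>A lattice path from (0,0) to (a,b) never passing strictly above the
segment from (0,0) to (a,b): every lattice point (x,y) visited satisfies
a*y <= b*x (by convexity it suffices to check the visited lattice points).\<close>
definition dyck_path :: "nat \<Rightarrow> nat \<Rightarrow> step list \<Rightarrow> bool" where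
  "dyck_path a b p \<longleftrightarrow> xcoord p = a \<and> ycoord p = b \<and>
     (\<forall>k \<le> length p. a * ycoord (take k p) \<le> b * xcoord (take k p))"

definition maximal_dyck_path :: "nat \<Rightarrow> nat \<Rightarrow> step list \<Rightarrow> bool" where
  "maximal_dyck_path a b p \<longleftrightarrow> dyck_path a b p \<and>
     (\<forall>q. dyck_path a b q \<longrightarrow>
        (\<forall>k \<le> a + b. ycoord (take k q) \<le> ycoord (take k p)))"

definition christoffel :: "nat \<Rightarrow> nat \<Rightarrow> step list" where
  "christoffel a b = (THE p. maximal_dyck_path a b p)"

definition Cn_word :: "int \<Rightarrow> nat \<Rightarrow> step list" where
  "Cn_word r n = christoffel (nat (cseq r (n - 1))) (nat (cseq r (n - 2)))"

datatype letter = lh | lv | lH | lV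

fun wq_base :: "int \<Rightarrow> letter \<Rightarrow> letter \<Rightarrow> int" where
  "wq_base r lh lv = 1"
| "wq_base r lH lv = 1"
| "wq_base r lh lV = 1"
| "wq_base r lH lh = r"
| "wq_base r lv lV = r"
| "wq_base r lV lH = r^2 - 1"
| "wq_base r lv lh = -1"
| "wq_base r lv lH = -1"
| "wq_base r lV lh = -1"
| "wq_base r lh lH = -r"
| "wq_base r lV lv = -r"
| "wq_base r lH lV = -(r^2 - 1)"
| "wq_base r _ _ = 0"

definition wq :: "int \<Rightarrow> letter list \<Rightarrow> int" where
  "wq r W = (\<Sum>j < length W. \<Sum>i < j. wq_base r (W ! i) (W ! j))"

definition HV_of_step :: "step \<Rightarrow> letter" where
  "HV_of_step s = (if s = E then lH else lv)"

definition W_word :: "int \<Rightarrow> nat \<Rightarrow> letter list" where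
  "W_word r n = map HV_of_step (Cn_word r n)"

end

theory Submission
  imports Defs
begin

text \<open>The Christoffel word of \<open>\<P>(a, b)\<close> is the path whose height after \<open>k\<close> steps is
\<open>\<lfloor>b k / m\<rfloor>\<close>, where \<open>m = a + b\<close>. On a word over \<open>{H, v}\<close>, \<open>w\<^sub>q\<close> counts the pairs
\<open>H\<dots>v\<close> minus the pairs \<open>v\<dots>H\<close>, which for a path of length \<open>m\<close>
and height \<open>b\<close> is \<open>(m - 1) b - 2 \<Sum>\<^sub>k y\<^sub>k\<close> with \<open>y\<^sub>k\<close> the height after \<open>k\<close> steps.
If \<open>a\<close> and \<open>b\<close> are coprime, the reflection \<open>\<lfloor>b k / m\<rfloor> + \<lfloor>b (m - k) / m\<rfloor> = b - 1\<close>
(\<open>0 < k < m\<close>) gives \<open>2 \<Sum>\<^sub>k \<lfloor>b k / m\<rfloor> = (m - 1)(b - 1)\<close>, so \<open>w\<^sub>q = m - 1 = a + b - 1\<close>.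
Consecutive terms of \<open>c\<^sub>n\<close> are coprime and, for \<open>r \<ge> 2\<close>, nonnegative.\<close>

lemma cseq_nonneg_mono:
  assumes "r \<ge> 2"
  shows "0 \<le> cseq r (Suc k) \<and> cseq r (Suc k) \<le> cseq r (Suc (Suc k))"
proof (induction k)
  case 0
  then show ?case by simp
next
  case (Suc k)
  let ?y = "cseq r (Suc (Suc k))"
  have "2 * ?y \<le> r * ?y" using Suc assms by (intro mult_right_mono) auto
  then show ?case using Suc by simp
qed

lemma cseq_nonneg: "r \<ge> 2 \<Longrightarrow> 0 < k \<Longrightarrow> 0 \<le> cseq r k"
  using cseq_nonneg_mono[of r "k - 1"] by simp

lemma coprime_cseq_Suc: "coprime (cseq r k) (cseq r (Suc k))"
proof (induction k)
  case 0
  then show ?case by simp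
next
  case (Suc k)
  let ?x = "cseq r k" and ?y = "cseq r (Suc k)"
  have "coprime ?y (r * ?y - ?x)"
  proof (rule coprime_imp_coprime[OF Suc.IH])
    fix d assume "\<not> is_unit d" "d dvd ?y" "d dvd r * ?y - ?x"
    then show "d dvd ?x" by (simp add: dvd_diff_right_iff)
  qed
  then show ?case by simp
qed

lemma xcoord_add_ycoord: "xcoord p + ycoord p = length p"
proof (induction p)
  case (Cons s p)
  then show ?case by (cases s) (auto simp: xcoord_def ycoord_def)
qed (simp add: xcoord_def ycoord_def)

lemma ycoord_snoc: "ycoord (p @ [s]) = ycoord p + (if s = N then 1 else 0)"
  by (simp add: ycoord_def)

lemma step_list_eqI_ycoord_take:
  assumes "length p = length q" "\<And>k. k \<le> length p \<Longrightarrow> ycoord (take k p) = ycoord (take k q)"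
  shows "p = q"
proof (rule nth_equalityI)
  fix i assume i: "i < length p"
  have "ycoord (take (Suc i) p) - ycoord (take i p) = ycoord (take (Suc i) q) - ycoord (take i q)"
    using assms(2) i by simp
  then show "p ! i = q ! i"
    using i assms(1) by (cases "p ! i"; cases "q ! i") (auto simp: take_Suc_conv_app_nth ycoord_snoc)
qed fact

definition floor_path :: "nat \<Rightarrow> nat \<Rightarrow> step list" where
  "floor_path a b =
     map (\<lambda>k. if b * (k + 1) div (a + b) = b * k div (a + b) then E else N) [0..<a + b]"

lemma length_floor_path [simp]: "length (floor_path a b) = a + b"
  by (simp add: floor_path_def)

lemma ycoord_take_floor_path:
  "k \<le> a + b \<Longrightarrow> ycoord (take k (floor_path a b)) = b * k div (a + b)"
proof (induction k)
  case 0
  then show ?case by (simp add: ycoord_def)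
next
  case (Suc k)
  let ?m = "a + b"
  have "b * k div ?m \<le> b * (k + 1) div ?m" by (simp add: div_le_mono)
  moreover have "b * (k + 1) div ?m \<le> (b * k + ?m) div ?m" by (simp add: div_le_mono)
  moreover have "?m \<noteq> 0" using Suc.prems by linarith
  then have "(b * k + ?m) div ?m = b * k div ?m + 1" by (rule div_add_self2)
  moreover have "floor_path a b ! k = (if b * (k + 1) div ?m = b * k div ?m then E else N)"
    using Suc.prems by (simp add: floor_path_def)
  ultimately show ?case
    using Suc by (auto simp: take_Suc_conv_app_nth ycoord_snoc)
qed

lemma ycoord_floor_path: "0 < a + b \<Longrightarrow> ycoord (floor_path a b) = b"
  using ycoord_take_floor_path[of "a + b" a b] by simp

lemma length_dyck_path: "dyck_path a b q \<Longrightarrow> length q = a + b"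
  using xcoord_add_ycoord[of q] by (simp add: dyck_path_def)

lemma dyck_path_ycoord_take_le:
  assumes "dyck_path a b q" "k \<le> length q"
  shows "ycoord (take k q) \<le> b * k div (a + b)"
proof (cases "a + b = 0")
  case True
  then show ?thesis using assms length_dyck_path[of a b q] by (simp add: ycoord_def)
next
  case False
  let ?x = "xcoord (take k q)" and ?y = "ycoord (take k q)"
  have "a * ?y \<le> b * ?x" using assms unfolding dyck_path_def by auto
  moreover have "?x + ?y = k" using xcoord_add_ycoord[of "take k q"] assms(2) by simp
  ultimately have "(a + b) * ?y \<le> b * k" by (metis add_mult_distrib add_mult_distrib2 add_le_mono1)
  then have "(a + b) * ?y div (a + b) \<le> b * k div (a + b)" by (rule div_le_mono)
  with False show ?thesis by simp
qed

lemma dyck_path_floor_path: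
  assumes "0 < a + b"
  shows "dyck_path a b (floor_path a b)"
  unfolding dyck_path_def
proof (intro conjI allI impI)
  show "ycoord (floor_path a b) = b" using ycoord_floor_path[OF assms] .
  then show "xcoord (floor_path a b) = a" using xcoord_add_ycoord[of "floor_path a b"] by simp
  fix k assume "k \<le> length (floor_path a b)"
  then have k: "k \<le> a + b" by simp
  let ?y = "b * k div (a + b)"
  have y: "ycoord (take k (floor_path a b)) = ?y" using ycoord_take_floor_path[OF k] .
  then have x: "xcoord (take k (floor_path a b)) = k - ?y"
    using xcoord_add_ycoord[of "take k (floor_path a b)"] k by simp
  have "?y \<le> (a + b) * k div (a + b)" by (intro div_le_mono) simp
  also have "\<dots> = k" using assms by simp
  finally have "?y \<le> k" .
  moreover have "(a + b) * ?y \<le> b * k" by simp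
  ultimately show "a * ycoord (take k (floor_path a b)) \<le> b * xcoord (take k (floor_path a b))"
    unfolding x y by (simp add: algebra_simps diff_mult_distrib2 le_diff_conv2)
qed

lemma maximal_dyck_path_floor_path:
  "0 < a + b \<Longrightarrow> maximal_dyck_path a b (floor_path a b)"
  unfolding maximal_dyck_path_def
  by (auto simp: dyck_path_floor_path ycoord_take_floor_path length_dyck_path
      intro: dyck_path_ycoord_take_le)

lemma christoffel_eq_floor_path:
  assumes "0 < a + b"
  shows "christoffel a b = floor_path a b"
  unfolding christoffel_def
proof (rule the_equality)
  fix p assume p: "maximal_dyck_path a b p"
  then have "dyck_path a b p" by (simp add: maximal_dyck_path_def)
  then have len: "length p = a + b" by (rule length_dyck_path)
  show "p = floor_path a b"
  proof (rule step_list_eqI_ycoord_take)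
    fix k assume k: "k \<le> length p"
    have "ycoord (take k (floor_path a b)) \<le> ycoord (take k p)"
      using p dyck_path_floor_path[OF assms] k len by (simp add: maximal_dyck_path_def)
    moreover have "ycoord (take k p) \<le> b * k div (a + b)"
      using \<open>dyck_path a b p\<close> k by (rule dyck_path_ycoord_take_le)
    ultimately show "ycoord (take k p) = ycoord (take k (floor_path a b))"
      using ycoord_take_floor_path k len by simp
  qed (simp add: len)
qed (rule maximal_dyck_path_floor_path[OF assms])

lemma wq_snoc: "wq r (W @ [x]) = wq r W + (\<Sum>i<length W. wq_base r (W ! i) x)"
  unfolding wq_def by (simp add: nth_append)

lemma HV_of_step_simps [simp]: "HV_of_step E = lH" "HV_of_step N = lv"
  by (simp_all add: HV_of_step_def)

lemma sum_list_wq_base_H: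
  "(\<Sum>t\<leftarrow>p. wq_base r (HV_of_step t) lH) = - int (ycoord p)"
proof (induction p)
  case (Cons s p)
  then show ?case by (cases s) (auto simp: ycoord_def)
qed (simp add: ycoord_def)

lemma sum_list_wq_base_v:
  "(\<Sum>t\<leftarrow>p. wq_base r (HV_of_step t) lv) = int (xcoord p)"
proof (induction p)
  case (Cons s p)
  then show ?case by (cases s) (auto simp: xcoord_def)
qed (simp add: xcoord_def)

lemma wq_map_HV_of_step:
  "wq r (map HV_of_step p) =
     (int (length p) - 1) * int (ycoord p) - 2 * (\<Sum>k<length p. int (ycoord (take k p)))"
proof (induction p rule: rev_induct)
  case Nil
  then show ?case by (simp add: wq_def ycoord_def)
next
  case (snoc s p)
  have wq_append_step: "wq r (map HV_of_step (p @ [s]))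
      = wq r (map HV_of_step p) + (\<Sum>t\<leftarrow>p. wq_base r (HV_of_step t) (HV_of_step s))"
    by (simp add: wq_snoc sum_list_sum_nth atLeast0LessThan)
  have "int (xcoord p) + int (ycoord p) = int (length p)"
    using xcoord_add_ycoord[of p] by linarith
  then show ?case
    unfolding wq_append_step using snoc.IH sum_list_wq_base_H[of r p] sum_list_wq_base_v[of r p]
    by (cases s) (simp_all add: ycoord_snoc algebra_simps)
qed

lemma mult_div_add_mult_diff_div:
  fixes b m j :: int
  assumes "coprime b m" "0 < j" "j < m"
  shows "b * j div m + b * (m - j) div m = b - 1"
proof -
  define q where "q = b * j div m"
  define s where "s = b * j mod m"
  have s_range: "0 < s" "s < m"
  proof -
    have "\<not> m dvd j" using assms(2,3) zdvd_imp_le by fastforce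
    then have "\<not> m dvd b * j" using assms(1) by (simp add: coprime_commute coprime_dvd_mult_right_iff)
    then show "0 < s" "s < m" using assms(2,3) unfolding s_def
      by (simp_all add: dvd_eq_mod_eq_0 order_le_neq_trans)
  qed
  have "b * (m - j) = (b - q - 1) * m + (m - s)"
    using div_mult_mod_eq[of "b * j" m] unfolding q_def s_def by (simp add: algebra_simps)
  then have "b * (m - j) div m = b - q - 1"
    using s_range by (simp add: div_pos_pos_trivial)
  then show ?thesis unfolding q_def by simp
qed

lemma sum_mult_div_coprime:
  fixes b m :: nat
  assumes "coprime b m"
  shows "2 * (\<Sum>j<m. int (b * j div m)) = (int m - 1) * (int b - 1)"
proof (cases "m \<le> 1")
  case True
  then show ?thesis using assms by (cases m) auto
next
  case False
  define f where "f j = int b * int j div int m" for j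
  have "(\<Sum>j<m. int (b * j div m)) = (\<Sum>j\<in>{1..<m}. f j)"
  proof -
    have "{..<m} = insert 0 {1..<m}" using False by auto
    then show ?thesis by (simp add: f_def zdiv_int)
  qed
  moreover have "(\<Sum>j\<in>{1..<m}. f j) = (\<Sum>j\<in>{1..<m}. f (m - j))"
    by (rule sum.reindex_bij_witness[of _ "\<lambda>j. m - j" "\<lambda>j. m - j"]) auto
  moreover have "(\<Sum>j\<in>{1..<m}. f j + f (m - j)) = (\<Sum>j\<in>{1..<m}. int b - 1)"
    using mult_div_add_mult_diff_div[of "int b" "int m"] assms
    by (intro sum.cong) (auto simp: f_def of_nat_diff)
  ultimately show ?thesis using False by (simp add: sum.distrib of_nat_diff algebra_simps)
qed

lemma wq_christoffel:
  assumes "coprime a b"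
  shows "wq r (map HV_of_step (christoffel a b)) = int a + int b - 1"
proof -
  define m where "m = a + b"
  have "0 < m" using assms unfolding m_def by (cases "a = 0") auto
  moreover have "gcd b m = gcd a b" unfolding m_def by (metis add.commute gcd.commute gcd_add2)
  then have "coprime b m" using assms by (simp add: coprime_iff_gcd_eq_1)
  moreover have "(\<Sum>k<m. int (ycoord (take k (floor_path a b)))) = (\<Sum>k<m. int (b * k div m))"
    by (simp add: ycoord_take_floor_path m_def)
  ultimately have "wq r (map HV_of_step (christoffel a b))
      = (int m - 1) * int b - (int m - 1) * (int b - 1)"
    using sum_mult_div_coprime[of b m]
    by (simp add: christoffel_eq_floor_path wq_map_HV_of_step ycoord_floor_path m_def)
  then show ?thesis by (simp add: m_def algebra_simps)
qed

theorem mainTheorem4: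
  fixes r :: int and n :: nat
  assumes "r \<ge> 2" and "n \<ge> 3"
  shows "wq r (W_word r n) = cseq r (n - 1) + cseq r (n - 2) - 1"
proof -
  have "0 \<le> cseq r (n - 1)" "0 \<le> cseq r (n - 2)"
    using cseq_nonneg[OF assms(1)] assms(2) by simp_all
  then obtain a b where a: "cseq r (n - 1) = int a" and b: "cseq r (n - 2) = int b"
    by (metis nonneg_int_cases)
  have "Suc (n - 2) = n - 1" using assms(2) by simp
  then have "coprime b a" using coprime_cseq_Suc[of r "n - 2"] a b by simp
  moreover have "W_word r n = map HV_of_step (christoffel a b)"
    unfolding W_word_def Cn_word_def a b by simp
  ultimately show ?thesis unfolding a b using wq_christoffel[of a b r] by (simp add: coprime_commute)
qed

end
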